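(* Let $p, p' > 1$ be real numbers with $\frac{1}{p}+\frac{1}{p'}=1$, and let $\mu,\nu$ be probability distributions on $S$ with $\nu(s)>0$ for all $s\in S$. For every joint stationary strategy $\boldsymbol{\pi}=(\pi^i,\boldsymbol\pi^{-i})$, every player $i\in\{1,\dots,N\}$ and every $v^i:S\to\mathbb{R}$, letting $\pi^i_*$ be a stationary best response of player $i$ to $\boldsymbol\pi^{-i}$ (i.e. $v^i_{\pi^i_*,\boldsymbol\pi^{-i}}=v^{*i}_{\boldsymbol\pi^{-i}}$, the fixed point of $\mathcal T^{*i}_{\boldsymbol\pi^{-i}}$), $$\big\|v^i_{\pi^i_*,\boldsymbol\pi^{-i}}-v^i_{\pi^i,\boldsymbol\pi^{-i}}\big\|_{\mu,p}\le \frac{1}{1-\gamma}\Big(C_\infty(\mu,\nu,(\pi^i_*,\boldsymbol\pi^{-i}))^{p'/p}+C_\infty(\mu,\nu,(\pi^i,\boldsymbol\pi^{-i}))^{p'/p}\Big)^{1/p'}\Big[\big\|\mathcal T^{*i}_{\boldsymbol\pi^{-i}}v^i-v^i\big\|_{\nu,p}^p+\big\|\mathcal T^i_{\boldsymbol\pi}v^i-v^i\big\|_{\nu,p}^p\Big]^{1/p}.$$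
   Context: An $N$-player Markov game has a finite state space $S$, finite nonempty action sets $A^i(s)$ for each player $i\in\{1,\dots,N\}$ and state $s$, rewards $r^i(s,\mathbf a)\in\mathbb{R}$ for joint actions $\mathbf a=(a^1,\dots,a^N)$, a transition kernel $p(s'|s,\mathbf a)$, and a discount factor $\gamma\in[0,1)$. We write $\mathbf a=(a^i,\mathbf a^{-i})$ where $\mathbf a^{-i}$ is the joint action of all players other than $i$. A stationary strategy $\pi^i$ of player $i$ assigns to each $s$ a probability distribution $\pi^i(\cdot|s)$ on $A^i(s)$; a joint strategy is $\boldsymbol\pi=(\pi^1,\dots,\pi^N)=(\pi^i,\boldsymbol\pi^{-i})$, with actions drawn independently across players. Define $\mathcal P_{\boldsymbol\pi}(s'|s)=E_{\mathbf a\sim\boldsymbol\pi(\cdot|s)}[p(s'|s,\mathbf a)]$, $r^i_{\boldsymbol\pi}(s)=E_{\mathbf a\sim\boldsymbol\pi(\cdot|s)}[r^i(s,\mathbf a)]$, $\mathcal P_{\boldsymbol\pi^{-i}}(s'|s,a^i)=E_{\mathbf a^{-i}\sim\boldsymbol\pi^{-i}(\cdot|s)}[p(s'|s,a^i,\mathbf a^{-i})]$, $r^i_{\boldsymbol\pi^{-i}}(s,a^i)=E_{\mathbf a^{-i}\sim\boldsymbol\pi^{-i}(\cdot|s)}[r^i(s,a^i,\mathbf a^{-i})]$. The value of $\boldsymbol\pi$ for player $i$ is $v^i_{\boldsymbol\pi}=(\mathcal I-\gamma\mathcal P_{\boldsymbol\pi})^{-1}r^i_{\boldsymbol\pi}$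 (vectors/matrices indexed by $S$, $\mathcal I$ the identity). The best-response value is $v^{*i}_{\boldsymbol\pi^{-i}}=\max_{\tilde\pi^i} v^i_{\tilde\pi^i,\boldsymbol\pi^{-i}}$ (pointwise maximum over stationary strategies of player $i$). For $v:S\to\mathbb R$, the Bellman operators are $\mathcal T^i_{\boldsymbol\pi}v(s)=r^i_{\boldsymbol\pi}(s)+\gamma\sum_{s'}\mathcal P_{\boldsymbol\pi}(s'|s)v(s')$ and $\mathcal T^{*i}_{\boldsymbol\pi^{-i}}v(s)=\max_{a^i\in A^i(s)}\big[r^i_{\boldsymbol\pi^{-i}}(s,a^i)+\gamma\sum_{s'}\mathcal P_{\boldsymbol\pi^{-i}}(s'|s,a^i)v(s')\big]$. For a distribution $\mu$ on $S$ and $f:S\to\mathbb R$, $\|f\|_{\mu,p}=(\sum_{s}\mu(s)|f(s)|^p)^{1/p}$. The concentrability coefficient of a joint strategy $\boldsymbol\pi$ is $C_\infty(\mu,\nu,\boldsymbol\pi)=\max_{s\in S}\frac{[(1-\gamma)\mu^T(\mathcal I-\gamma\mathcal P_{\boldsymbol\pi})^{-1}](s)}{\nu(s)}$ (the sup-norm of the Radon–Nikodym derivative of the distribution $(1-\gamma)\mu^T(\mathcal I-\gamma\mathcal P_{\boldsymbol\pi})^{-1}$ with respect to $\nu$). *)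

theory Defs
  imports "HOL-Analysis.Analysis" "HOL-Probability.Product_PMF"
begin

(* Players: finite type 'p; states: finite type 's; actions: type 'a with
   per-player, per-state action sets A i s.
   A joint strategy: 'p => 's => 'a pmf; actions are drawn independently. *)

definition strategy :: "('p \<Rightarrow> 's \<Rightarrow> 'a set) \<Rightarrow> 'p \<Rightarrow> ('s \<Rightarrow> 'a pmf) \<Rightarrow> bool" where
  "strategy A i \<sigma> \<longleftrightarrow> (\<forall>s. set_pmf (\<sigma> s) \<subseteq> A i s)"

definition joint_strategy :: "('p \<Rightarrow> 's \<Rightarrow> 'a set) \<Rightarrow> ('p \<Rightarrow> 's \<Rightarrow> 'a pmf) \<Rightarrow> bool" where
  "joint_strategy A \<pi> \<longleftrightarrow> (\<forall>i. strategy A i (\<pi> i))"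

definition joint :: "('p::finite \<Rightarrow> 's \<Rightarrow> 'a pmf) \<Rightarrow> 's \<Rightarrow> ('p \<Rightarrow> 'a) pmf" where
  "joint \<pi> s = Pi_pmf UNIV undefined (\<lambda>j. \<pi> j s)"

definition Pmat :: "('s::finite \<Rightarrow> ('p::finite \<Rightarrow> 'a) \<Rightarrow> 's pmf) \<Rightarrow> ('p \<Rightarrow> 's \<Rightarrow> 'a pmf) \<Rightarrow> real^'s^'s" where
  "Pmat K \<pi> = (\<chi> s s'. measure_pmf.expectation (joint \<pi> s) (\<lambda>a. pmf (K s a) s'))"

definition rvec :: "('p \<Rightarrow> 's::finite \<Rightarrow> ('p::finite \<Rightarrow> 'a) \<Rightarrow> real) \<Rightarrow> 'p \<Rightarrow> ('p \<Rightarrow> 's \<Rightarrow> 'a pmf) \<Rightarrow> real^'s" where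
  "rvec r i \<pi> = (\<chi> s. measure_pmf.expectation (joint \<pi> s) (\<lambda>a. r i s a))"

definition val :: "('s::finite \<Rightarrow> ('p::finite \<Rightarrow> 'a) \<Rightarrow> 's pmf) \<Rightarrow> ('p \<Rightarrow> 's \<Rightarrow> ('p \<Rightarrow> 'a) \<Rightarrow> real) \<Rightarrow> real
    \<Rightarrow> 'p \<Rightarrow> ('p \<Rightarrow> 's \<Rightarrow> 'a pmf) \<Rightarrow> real^'s" where
  "val K r \<gamma> i \<pi> = matrix_inv (mat 1 - \<gamma> *\<^sub>R Pmat K \<pi>) *v rvec r i \<pi>"

definition br_val :: "('s::finite \<Rightarrow> ('p::finite \<Rightarrow> 'a) \<Rightarrow> 's pmf) \<Rightarrow> ('p \<Rightarrow> 's \<Rightarrow> ('p \<Rightarrow> 'a) \<Rightarrow> real) \<Rightarrow> real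
    \<Rightarrow> ('p \<Rightarrow> 's \<Rightarrow> 'a set) \<Rightarrow> 'p \<Rightarrow> ('p \<Rightarrow> 's \<Rightarrow> 'a pmf) \<Rightarrow> real^'s" where
  "br_val K r \<gamma> A i \<pi> = (\<chi> s. SUP \<sigma>\<in>{\<sigma>. strategy A i \<sigma>}. val K r \<gamma> i (\<pi>(i := \<sigma>)) $ s)"

definition r_mi :: "('p \<Rightarrow> 's::finite \<Rightarrow> ('p::finite \<Rightarrow> 'a) \<Rightarrow> real) \<Rightarrow> 'p \<Rightarrow> ('p \<Rightarrow> 's \<Rightarrow> 'a pmf) \<Rightarrow> 's \<Rightarrow> 'a \<Rightarrow> real" where
  "r_mi r i \<pi> s a = measure_pmf.expectation (joint (\<pi>(i := (\<lambda>_. return_pmf a))) s) (\<lambda>b. r i s b)"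

definition P_mi :: "('s::finite \<Rightarrow> ('p::finite \<Rightarrow> 'a) \<Rightarrow> 's pmf) \<Rightarrow> 'p \<Rightarrow> ('p \<Rightarrow> 's \<Rightarrow> 'a pmf) \<Rightarrow> 's \<Rightarrow> 'a \<Rightarrow> 's \<Rightarrow> real" where
  "P_mi K i \<pi> s a s' = measure_pmf.expectation (joint (\<pi>(i := (\<lambda>_. return_pmf a))) s) (\<lambda>b. pmf (K s b) s')"

definition T_op :: "('s::finite \<Rightarrow> ('p::finite \<Rightarrow> 'a) \<Rightarrow> 's pmf) \<Rightarrow> ('p \<Rightarrow> 's \<Rightarrow> ('p \<Rightarrow> 'a) \<Rightarrow> real) \<Rightarrow> real
    \<Rightarrow> 'p \<Rightarrow> ('p \<Rightarrow> 's \<Rightarrow> 'a pmf) \<Rightarrow> real^'s \<Rightarrow> real^'s" where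
  "T_op K r \<gamma> i \<pi> v = (\<chi> s. rvec r i \<pi> $ s + \<gamma> * (\<Sum>s'\<in>UNIV. Pmat K \<pi> $ s $ s' * v $ s'))"

(* Bellman optimality operator T^{*i}_{pi^{-i}} (only pi^{-i} matters) *)
definition Tstar_op :: "('s::finite \<Rightarrow> ('p::finite \<Rightarrow> 'a) \<Rightarrow> 's pmf) \<Rightarrow> ('p \<Rightarrow> 's \<Rightarrow> ('p \<Rightarrow> 'a) \<Rightarrow> real) \<Rightarrow> real
    \<Rightarrow> ('p \<Rightarrow> 's \<Rightarrow> 'a set) \<Rightarrow> 'p \<Rightarrow> ('p \<Rightarrow> 's \<Rightarrow> 'a pmf) \<Rightarrow> real^'s \<Rightarrow> real^'s" where
  "Tstar_op K r \<gamma> A i \<pi> v = (\<chi> s. Max ((\<lambda>a. r_mi r i \<pi> s a + \<gamma> * (\<Sum>s'\<in>UNIV. P_mi K i \<pi> s a s' * v $ s')) ` A i s))"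

definition lpnorm :: "'s::finite pmf \<Rightarrow> real \<Rightarrow> real^'s \<Rightarrow> real" where
  "lpnorm \<mu> p f = (\<Sum>s\<in>UNIV. pmf \<mu> s * \<bar>f $ s\<bar> powr p) powr (1 / p)"

definition conc :: "('s::finite \<Rightarrow> ('p::finite \<Rightarrow> 'a) \<Rightarrow> 's pmf) \<Rightarrow> real \<Rightarrow> 's pmf \<Rightarrow> 's pmf
    \<Rightarrow> ('p \<Rightarrow> 's \<Rightarrow> 'a pmf) \<Rightarrow> real" where
  "conc K \<gamma> \<mu> \<nu> \<pi> = Max (range (\<lambda>s.
      (((1 - \<gamma>) *\<^sub>R ((\<chi> t. pmf \<mu> t) v* matrix_inv (mat 1 - \<gamma> *\<^sub>R Pmat K \<pi>))) $ s) / pmf \<nu> s))"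

end

theory Submission
  imports Defs
begin

text \<open>Since \<open>v\<^sub>\<sigma> - v = (I - \<gamma> P\<^sub>\<sigma>)\<inverse> (T\<^sub>\<sigma> v - v)\<close> for every joint strategy \<open>\<sigma>\<close>, and the best
  response satisfies \<open>T\<^sub>\<pi>\<^sub>* v \<le> T\<^sup>* v\<close>, the nonnegative gap \<open>v\<^sub>\<pi>\<^sub>* - v\<^sub>\<pi>\<close> is bounded entrywise by
  \<open>(I - \<gamma> P\<^sub>\<pi>\<^sub>*)\<inverse> |T\<^sup>* v - v| + (I - \<gamma> P\<^sub>\<pi>)\<inverse> |T\<^sub>\<pi> v - v|\<close>, the resolvents being monotone.
  The rows of \<open>(1 - \<gamma>) (I - \<gamma> P)\<inverse>\<close> are probability vectors, so Jensen's inequality bounds the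
  \<open>\<mu>\<close>-weighted \<open>p\<close>-th moment of each term by the concentrability coefficient times the
  \<open>\<nu>\<close>-weighted \<open>p\<close>-th moment of the residual. The two terms are recombined with
  \<open>(G + H) powr p \<le> l powr (1 - p) * G powr p + (1 - l) powr (1 - p) * H powr p\<close> for the
  optimal weight \<open>l\<close>.\<close>

definition stochastic_matrix :: "real^'n^'n \<Rightarrow> bool" where
  "stochastic_matrix P \<longleftrightarrow> (\<forall>s t. 0 \<le> P$s$t) \<and> (\<forall>s. (\<Sum>t\<in>UNIV. P$s$t) = 1)"

abbreviation resolvent :: "real \<Rightarrow> real^'n^'n \<Rightarrow> real^'n^'n" where
  "resolvent \<gamma> P \<equiv> matrix_inv (mat 1 - \<gamma> *\<^sub>R P)"

lemma discount_matrix_mult_nth: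
  fixes P :: "real^'n::finite^'n"
  shows "((mat 1 - \<gamma> *\<^sub>R P) *v y) $ s = y$s - \<gamma> * (\<Sum>t\<in>UNIV. P$s$t * y$t)"
proof -
  have "((mat 1 - \<gamma> *\<^sub>R P) *v y) $ s = (\<Sum>t\<in>UNIV. (if s = t then y$t else 0) - \<gamma> * P$s$t * y$t)"
    by (simp add: matrix_vector_mult_def mat_def left_diff_distrib if_distrib[of "\<lambda>a. a * _"] cong: if_cong)
  also have "\<dots> = y$s - \<gamma> * (\<Sum>t\<in>UNIV. P$s$t * y$t)"
    by (simp add: sum_subtractf sum_distrib_left mult.assoc)
  finally show ?thesis .
qed

lemma stochastic_matrix_mult_const:
  assumes "stochastic_matrix P"
  shows "(\<Sum>t\<in>UNIV. P$s$t * c) = c"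
  using assms by (simp add: stochastic_matrix_def sum_distrib_right[symmetric])

text \<open>Maximum principle: at a minimal entry of \<open>x\<close>, the averaged value \<open>P x\<close> is at least
  that entry, so \<open>(I - \<gamma> P) x \<ge> 0\<close> forces \<open>(1 - \<gamma>) min x \<ge> 0\<close>.\<close>
lemma discount_matrix_mult_nonneg_imp_nonneg:
  fixes P :: "real^'n::finite^'n"
  assumes P: "stochastic_matrix P" and g: "0 \<le> \<gamma>" "\<gamma> < 1"
    and nonneg: "\<And>s. 0 \<le> ((mat 1 - \<gamma> *\<^sub>R P) *v x) $ s"
  shows "0 \<le> x $ t"
proof -
  define m where "m = arg_min_on (\<lambda>t. x$t) UNIV"
  have m: "x$m \<le> x$t" for t
    unfolding m_def by (rule arg_min_least) auto
  have "x$m = (\<Sum>t\<in>UNIV. P$m$t * x$m)"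
    using P by (simp add: stochastic_matrix_mult_const)
  also have "\<dots> \<le> (\<Sum>t\<in>UNIV. P$m$t * x$t)"
    using P m by (intro sum_mono mult_left_mono) (auto simp: stochastic_matrix_def)
  finally have "\<gamma> * x$m \<le> \<gamma> * (\<Sum>t\<in>UNIV. P$m$t * x$t)"
    using g by (simp add: mult_left_mono)
  then have "0 \<le> (1 - \<gamma>) * x$m"
    using nonneg[of m] discount_matrix_mult_nth[of \<gamma> P x m] by (simp add: algebra_simps)
  then have "0 \<le> x$m"
    using g by (simp add: zero_le_mult_iff)
  then show ?thesis
    using m[of t] by linarith
qed

lemma invertible_discount_matrix:
  fixes P :: "real^'n::finite^'n"
  assumes P: "stochastic_matrix P" and g: "0 \<le> \<gamma>" "\<gamma> < 1"
  shows "invertible (mat 1 - \<gamma> *\<^sub>R P)"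
proof -
  have "x = 0" if x: "(mat 1 - \<gamma> *\<^sub>R P) *v x = 0" for x
  proof -
    have neg: "(mat 1 - \<gamma> *\<^sub>R P) *v (- x) = 0"
      using x matrix_vector_mult_diff_distrib[of "mat 1 - \<gamma> *\<^sub>R P" 0 x] by simp
    have "0 \<le> (- x)$t" for t
      by (rule discount_matrix_mult_nonneg_imp_nonneg[OF P g]) (simp add: neg)
    moreover have "0 \<le> x$t" for t
      by (rule discount_matrix_mult_nonneg_imp_nonneg[OF P g]) (simp add: x)
    ultimately show ?thesis
      by (simp add: vec_eq_iff order_antisym)
  qed
  then show ?thesis
    by (simp add: invertible_left_inverse matrix_left_invertible_ker)
qed

lemma
  fixes P :: "real^'n::finite^'n"
  assumes P: "stochastic_matrix P" and g: "0 \<le> \<gamma>" "\<gamma> < 1"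
  shows discount_matrix_mult_resolvent: "(mat 1 - \<gamma> *\<^sub>R P) *v (resolvent \<gamma> P *v x) = x"
    and resolvent_mult_discount_matrix: "resolvent \<gamma> P *v ((mat 1 - \<gamma> *\<^sub>R P) *v x) = x"
proof -
  have "(mat 1 - \<gamma> *\<^sub>R P) ** resolvent \<gamma> P = mat 1 \<and> resolvent \<gamma> P ** (mat 1 - \<gamma> *\<^sub>R P) = mat 1"
    using invertible_discount_matrix[OF P g] unfolding matrix_inv_def invertible_def by (rule someI_ex)
  then show "(mat 1 - \<gamma> *\<^sub>R P) *v (resolvent \<gamma> P *v x) = x"
    and "resolvent \<gamma> P *v ((mat 1 - \<gamma> *\<^sub>R P) *v x) = x"
    by (simp_all add: matrix_vector_mul_assoc)
qed

lemma resolvent_mult_nonneg: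
  fixes P :: "real^'n::finite^'n"
  assumes P: "stochastic_matrix P" and g: "0 \<le> \<gamma>" "\<gamma> < 1"
    and x: "\<And>s. 0 \<le> x $ s"
  shows "0 \<le> (resolvent \<gamma> P *v x) $ t"
  by (rule discount_matrix_mult_nonneg_imp_nonneg[OF P g]) (simp add: discount_matrix_mult_resolvent[OF P g] x)

lemma resolvent_mult_mono:
  fixes P :: "real^'n::finite^'n"
  assumes P: "stochastic_matrix P" and g: "0 \<le> \<gamma>" "\<gamma> < 1"
    and x: "\<And>s. x $ s \<le> y $ s"
  shows "(resolvent \<gamma> P *v x) $ t \<le> (resolvent \<gamma> P *v y) $ t"
  using resolvent_mult_nonneg[OF P g, of "y - x" t] x by (simp add: matrix_vector_mult_diff_distrib)

lemma resolvent_mult_const: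
  fixes P :: "real^'n::finite^'n"
  assumes P: "stochastic_matrix P" and g: "0 \<le> \<gamma>" "\<gamma> < 1"
  shows "resolvent \<gamma> P *v (\<chi> t. c) = (\<chi> t. c / (1 - \<gamma>))"
proof -
  have "((mat 1 - \<gamma> *\<^sub>R P) *v (\<chi> t. c / (1 - \<gamma>))) $ s = c" for s
  proof -
    have "((mat 1 - \<gamma> *\<^sub>R P) *v (\<chi> t. c / (1 - \<gamma>))) $ s = (1 - \<gamma>) * (c / (1 - \<gamma>))"
      by (simp only: discount_matrix_mult_nth vec_lambda_beta stochastic_matrix_mult_const[OF P]
          left_diff_distrib mult_1)
    then show ?thesis
      using g by simp
  qed
  then have "(mat 1 - \<gamma> *\<^sub>R P) *v (\<chi> t. c / (1 - \<gamma>)) = (\<chi> t. c)"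
    by (simp add: vec_eq_iff)
  then show ?thesis
    using resolvent_mult_discount_matrix[OF P g, of "\<chi> t. c / (1 - \<gamma>)"] by simp
qed

lemma
  fixes P :: "real^'n::finite^'n"
  assumes P: "stochastic_matrix P" and g: "0 \<le> \<gamma>" "\<gamma> < 1"
  shows resolvent_nonneg: "0 \<le> resolvent \<gamma> P $ s $ t"
    and resolvent_row_sum: "(\<Sum>t\<in>UNIV. resolvent \<gamma> P $ s $ t) = 1 / (1 - \<gamma>)"
proof -
  show "0 \<le> resolvent \<gamma> P $ s $ t"
    using resolvent_mult_nonneg[OF P g, of "axis t 1" s]
    by (simp add: matrix_vector_mult_def axis_def if_distrib cong: if_cong)
  show "(\<Sum>t\<in>UNIV. resolvent \<gamma> P $ s $ t) = 1 / (1 - \<gamma>)"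
    using arg_cong[OF resolvent_mult_const[OF P g, of 1], of "\<lambda>v. v $ s"]
    by (simp add: matrix_vector_mult_def)
qed

lemma convex_on_powr_nonneg:
  assumes p: "p \<ge> 1"
  shows "convex_on {0..} (\<lambda>x::real. x powr p)"
proof (rule convex_onI)
  show "convex {0::real..}" by simp
  fix t x y :: real assume t: "0 < t" "t < 1" and xy: "x \<in> {0..}" "y \<in> {0..}"
  have tp: "t powr p \<le> t" using t p by (intro powr_le_one_le) auto
  have tp': "(1 - t) powr p \<le> 1 - t" using t p by (intro powr_le_one_le) auto
  show "((1 - t) *\<^sub>R x + t *\<^sub>R y) powr p \<le> (1 - t) * x powr p + t * y powr p"
  proof (cases "x = 0 \<or> y = 0")
    case True
    then show ?thesis
      using t xy tp tp' p by (auto simp: powr_mult mult_right_mono)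
  next
    case False
    then show ?thesis
      using xy t convex_onD[OF powr_convex[OF p], of t x y] by auto
  qed
qed

lemma powr_add_le_weighted:
  fixes G H l p :: real
  assumes l: "0 < l" "l < 1" and p: "p \<ge> 1" and G: "0 \<le> G" and H: "0 \<le> H"
  shows "(G + H) powr p \<le> l powr (1 - p) * G powr p + (1 - l) powr (1 - p) * H powr p"
proof -
  have e: "c * (x / c) powr p = c powr (1 - p) * x powr p" if "c > 0" for c x :: real
    using that by (simp add: powr_divide powr_diff field_simps)
  have "((1 - (1 - l)) *\<^sub>R (G / l) + (1 - l) *\<^sub>R (H / (1 - l))) powr p
      \<le> (1 - (1 - l)) * (G / l) powr p + (1 - l) * (H / (1 - l)) powr p"
    using l G H by (intro convex_onD[OF convex_on_powr_nonneg[OF p]]) auto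
  moreover have "(1 - (1 - l)) *\<^sub>R (G / l) + (1 - l) *\<^sub>R (H / (1 - l)) = G + H"
    using l by simp
  ultimately show ?thesis
    using e[of l G] e[of "1 - l" H] l by simp
qed

text \<open>The weights \<open>l\<close> and \<open>1 - l\<close> in \<open>powr_add_le_weighted\<close> are taken proportional to
  \<open>C\<^sub>k powr (p' / p) = C\<^sub>k powr (1 / (p - 1))\<close>, which minimises the resulting bound.\<close>
lemma sum_powr_add_le_conjugate:
  fixes \<mu> :: "'n::finite pmf" and G H :: "'n \<Rightarrow> real"
  assumes p: "p > 1" "1 / p + 1 / p' = 1"
    and G: "\<And>s. 0 \<le> G s" and H: "\<And>s. 0 \<le> H s" and C: "C1 > 0" "C2 > 0"
    and GX: "(\<Sum>s\<in>UNIV. pmf \<mu> s * G s powr p) \<le> C1 * X"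
    and HY: "(\<Sum>s\<in>UNIV. pmf \<mu> s * H s powr p) \<le> C2 * Y"
  shows "(\<Sum>s\<in>UNIV. pmf \<mu> s * (G s + H s) powr p)
    \<le> (C1 powr (p' / p) + C2 powr (p' / p)) powr (p - 1) * (X + Y)"
proof -
  define c1 where "c1 = C1 powr (p' / p)"
  define c2 where "c2 = C2 powr (p' / p)"
  define S where "S = c1 + c2"
  define l where "l = c1 / S"
  have c: "c1 > 0" "c2 > 0" and S: "S > 0"
    using C by (auto simp: c1_def c2_def S_def intro: add_pos_pos)
  have l: "0 < l" "l < 1" "1 - l = c2 / S"
    using c S by (auto simp: l_def S_def field_simps)
  have "p' \<noteq> 0"
    using p by auto
  then have exponent: "p' / p * (p - 1) = 1"
    using p by (simp add: field_simps)
  have optimal: "(c / S) powr (1 - p) * C = S powr (p - 1)" if c: "c = C powr (p' / p)" "C > 0" for c C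
  proof -
    have c_pos: "c > 0"
      using c by simp
    have "C = c powr (p - 1)"
      using c exponent by (simp add: powr_powr)
    then have "(c / S) powr (1 - p) * C = c powr (1 - p) * c powr (p - 1) / S powr (1 - p)"
      using c_pos S by (simp add: powr_divide)
    also have "c powr (1 - p) * c powr (p - 1) = 1"
      using c_pos by (simp add: powr_add[symmetric])
    also have "1 / S powr (1 - p) = S powr (p - 1)"
      by (simp add: powr_minus_divide[symmetric])
    finally show ?thesis .
  qed
  have "(\<Sum>s\<in>UNIV. pmf \<mu> s * (G s + H s) powr p)
      \<le> (\<Sum>s\<in>UNIV. pmf \<mu> s * (l powr (1 - p) * G s powr p + (1 - l) powr (1 - p) * H s powr p))"
    using l p G H by (intro sum_mono mult_left_mono powr_add_le_weighted) auto
  also have "\<dots> = l powr (1 - p) * (\<Sum>s\<in>UNIV. pmf \<mu> s * G s powr p)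
      + (1 - l) powr (1 - p) * (\<Sum>s\<in>UNIV. pmf \<mu> s * H s powr p)"
    by (simp add: sum.distrib sum_distrib_left algebra_simps)
  also have "\<dots> \<le> l powr (1 - p) * (C1 * X) + (1 - l) powr (1 - p) * (C2 * Y)"
    using GX HY by (intro add_mono mult_left_mono) auto
  also have "\<dots> = S powr (p - 1) * (X + Y)"
    using optimal[OF c1_def C(1)] optimal[OF c2_def C(2)] l(3)
    by (simp add: l_def mult.assoc[symmetric] distrib_left)
  finally show ?thesis
    by (simp add: S_def c1_def c2_def)
qed

lemma lpnorm_le_conjugate:
  fixes \<mu> :: "'n::finite pmf" and f :: "real^'n"
  assumes p: "p > 1" "1 / p + 1 / p' = 1" and c: "0 \<le> c"
    and G: "\<And>s. 0 \<le> G s" and H: "\<And>s. 0 \<le> H s" and f: "\<And>s. \<bar>f $ s\<bar> \<le> c * (G s + H s)"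
    and C: "C1 > 0" "C2 > 0"
    and GX: "(\<Sum>s\<in>UNIV. pmf \<mu> s * G s powr p) \<le> C1 * X"
    and HY: "(\<Sum>s\<in>UNIV. pmf \<mu> s * H s powr p) \<le> C2 * Y"
  shows "lpnorm \<mu> p f \<le> c * (C1 powr (p' / p) + C2 powr (p' / p)) powr (1 / p') * (X + Y) powr (1 / p)"
proof -
  define S where "S = C1 powr (p' / p) + C2 powr (p' / p)"
  have S: "S > 0"
    using C by (simp add: S_def add_pos_pos)
  have "0 \<le> C1 * X" "0 \<le> C2 * Y"
    using order_trans[OF sum_nonneg GX] order_trans[OF sum_nonneg HY] by auto
  then have XY: "0 \<le> X + Y"
    using C by (simp add: zero_le_mult_iff)
  have "(\<Sum>s\<in>UNIV. pmf \<mu> s * \<bar>f $ s\<bar> powr p) \<le> (\<Sum>s\<in>UNIV. pmf \<mu> s * (c powr p * (G s + H s) powr p))"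
    using p c G H f by (intro sum_mono mult_left_mono) (auto simp: powr_mult[symmetric] intro: powr_mono2)
  also have "\<dots> = c powr p * (\<Sum>s\<in>UNIV. pmf \<mu> s * (G s + H s) powr p)"
    by (simp add: sum_distrib_left mult_ac)
  also have "\<dots> \<le> c powr p * (S powr (p - 1) * (X + Y))"
    unfolding S_def using sum_powr_add_le_conjugate[OF p G H C GX HY] by (intro mult_left_mono) auto
  finally have "lpnorm \<mu> p f \<le> (c powr p * (S powr (p - 1) * (X + Y))) powr (1 / p)"
    unfolding lpnorm_def using p by (intro powr_mono2) (auto intro!: sum_nonneg)
  also have "\<dots> = c * S powr ((p - 1) / p) * (X + Y) powr (1 / p)"
    using p c S XY by (simp add: powr_mult powr_powr)
  also have "(p - 1) / p = 1 / p'"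
    using p by (simp add: field_simps)
  finally show ?thesis
    by (simp add: S_def)
qed

definition occupancy :: "real \<Rightarrow> 'n::finite pmf \<Rightarrow> real^'n^'n \<Rightarrow> real^'n" where
  "occupancy \<gamma> \<mu> P = (1 - \<gamma>) *\<^sub>R ((\<chi> t. pmf \<mu> t) v* resolvent \<gamma> P)"

definition concentrability :: "real \<Rightarrow> 'n::finite pmf \<Rightarrow> 'n pmf \<Rightarrow> real^'n^'n \<Rightarrow> real" where
  "concentrability \<gamma> \<mu> \<nu> P = Max (range (\<lambda>s. occupancy \<gamma> \<mu> P $ s / pmf \<nu> s))"

lemma occupancy_nth:
  "occupancy \<gamma> \<mu> P $ t = (1 - \<gamma>) * (\<Sum>s\<in>UNIV. pmf \<mu> s * resolvent \<gamma> P $ s $ t)"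
  by (simp add: occupancy_def vector_matrix_mult_def mult.commute)

lemma sum_occupancy:
  fixes P :: "real^'n::finite^'n"
  assumes P: "stochastic_matrix P" and g: "0 \<le> \<gamma>" "\<gamma> < 1"
  shows "(\<Sum>t\<in>UNIV. occupancy \<gamma> \<mu> P $ t) = 1"
proof -
  have "(\<Sum>t\<in>UNIV. occupancy \<gamma> \<mu> P $ t) = (1 - \<gamma>) * (\<Sum>t\<in>UNIV. \<Sum>s\<in>UNIV. pmf \<mu> s * resolvent \<gamma> P $ s $ t)"
    by (simp add: occupancy_nth sum_distrib_left)
  also have "(\<Sum>t\<in>UNIV. \<Sum>s\<in>UNIV. pmf \<mu> s * resolvent \<gamma> P $ s $ t)
      = (\<Sum>s\<in>UNIV. pmf \<mu> s * (\<Sum>t\<in>UNIV. resolvent \<gamma> P $ s $ t))"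
    by (subst sum.swap) (simp add: sum_distrib_left)
  also have "\<dots> = (\<Sum>s\<in>UNIV. pmf \<mu> s) / (1 - \<gamma>)"
    by (simp add: resolvent_row_sum[OF P g] sum_divide_distrib)
  finally show ?thesis
    using g by (simp add: sum_pmf_eq_1)
qed

lemma occupancy_le_concentrability:
  assumes "pmf \<nu> t > 0"
  shows "occupancy \<gamma> \<mu> P $ t \<le> concentrability \<gamma> \<mu> \<nu> P * pmf \<nu> t"
proof -
  have "occupancy \<gamma> \<mu> P $ t / pmf \<nu> t \<le> concentrability \<gamma> \<mu> \<nu> P"
    unfolding concentrability_def by (rule Max_ge) auto
  then show ?thesis
    using assms by (simp add: divide_le_eq)
qed

lemma concentrability_pos:
  fixes P :: "real^'n::finite^'n"
  assumes P: "stochastic_matrix P" and g: "0 \<le> \<gamma>" "\<gamma> < 1" and \<nu>: "\<And>s. pmf \<nu> s > 0"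
  shows "concentrability \<gamma> \<mu> \<nu> P > 0"
proof (rule ccontr)
  assume "\<not> concentrability \<gamma> \<mu> \<nu> P > 0"
  then have "occupancy \<gamma> \<mu> P $ t \<le> 0" for t
    using occupancy_le_concentrability[OF \<nu>, of \<gamma> \<mu> P t] \<nu>[of t]
    by (smt (verit) mult_nonpos_nonneg)
  then have "(\<Sum>t\<in>UNIV. occupancy \<gamma> \<mu> P $ t) \<le> 0"
    by (simp add: sum_nonpos)
  then show False
    using sum_occupancy[OF P g] by simp
qed

text \<open>Jensen's inequality: the rows of \<open>(1 - \<gamma>) resolvent \<gamma> P\<close> are probability vectors.\<close>
lemma powr_resolvent_mult_le:
  fixes P :: "real^'n::finite^'n"
  assumes P: "stochastic_matrix P" and g: "0 \<le> \<gamma>" "\<gamma> < 1" and p: "p \<ge> 1"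
    and a: "\<And>t. 0 \<le> a $ t"
  shows "((1 - \<gamma>) * (resolvent \<gamma> P *v a) $ s) powr p
    \<le> (\<Sum>t\<in>UNIV. (1 - \<gamma>) * resolvent \<gamma> P $ s $ t * a $ t powr p)"
proof -
  have "(1 - \<gamma>) * (resolvent \<gamma> P *v a) $ s = (\<Sum>t\<in>UNIV. ((1 - \<gamma>) * resolvent \<gamma> P $ s $ t) *\<^sub>R a $ t)"
    by (simp add: matrix_vector_mult_def sum_distrib_left mult_ac)
  moreover have "(\<Sum>t\<in>UNIV. ((1 - \<gamma>) * resolvent \<gamma> P $ s $ t) *\<^sub>R a $ t) powr p
      \<le> (\<Sum>t\<in>UNIV. (1 - \<gamma>) * resolvent \<gamma> P $ s $ t * a $ t powr p)"
  proof (rule convex_on_sum[OF _ _ convex_on_powr_nonneg[OF p]])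
    show "(\<Sum>t\<in>UNIV. (1 - \<gamma>) * resolvent \<gamma> P $ s $ t) = 1"
      using resolvent_row_sum[OF P g] g by (simp add: sum_distrib_left[symmetric])
  qed (use resolvent_nonneg[OF P g] g a in auto)
  ultimately show ?thesis
    by simp
qed

lemma sum_powr_resolvent_mult_le_concentrability:
  fixes P :: "real^'n::finite^'n" and \<mu> \<nu> :: "'n pmf"
  assumes P: "stochastic_matrix P" and g: "0 \<le> \<gamma>" "\<gamma> < 1" and p: "p \<ge> 1"
    and a: "\<And>t. 0 \<le> a $ t" and \<nu>: "\<And>s. pmf \<nu> s > 0"
  shows "(\<Sum>s\<in>UNIV. pmf \<mu> s * ((1 - \<gamma>) * (resolvent \<gamma> P *v a) $ s) powr p)
    \<le> concentrability \<gamma> \<mu> \<nu> P * (\<Sum>t\<in>UNIV. pmf \<nu> t * a $ t powr p)"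
proof -
  have "(\<Sum>s\<in>UNIV. pmf \<mu> s * ((1 - \<gamma>) * (resolvent \<gamma> P *v a) $ s) powr p)
      \<le> (\<Sum>s\<in>UNIV. pmf \<mu> s * (\<Sum>t\<in>UNIV. (1 - \<gamma>) * resolvent \<gamma> P $ s $ t * a $ t powr p))"
    by (intro sum_mono mult_left_mono powr_resolvent_mult_le[OF P g p a]) auto
  also have "\<dots> = (\<Sum>t\<in>UNIV. \<Sum>s\<in>UNIV. pmf \<mu> s * ((1 - \<gamma>) * resolvent \<gamma> P $ s $ t * a $ t powr p))"
    by (subst sum.swap) (simp add: sum_distrib_left)
  also have "\<dots> = (\<Sum>t\<in>UNIV. occupancy \<gamma> \<mu> P $ t * a $ t powr p)"
    by (simp add: occupancy_nth sum_distrib_left sum_distrib_right mult_ac)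
  also have "\<dots> \<le> (\<Sum>t\<in>UNIV. concentrability \<gamma> \<mu> \<nu> P * pmf \<nu> t * a $ t powr p)"
    by (intro sum_mono mult_right_mono occupancy_le_concentrability \<nu>) auto
  finally show ?thesis
    by (simp add: sum_distrib_left mult_ac)
qed

lemma lpnorm_powr:
  assumes "p > 0"
  shows "lpnorm \<mu> p f powr p = (\<Sum>s\<in>UNIV. pmf \<mu> s * \<bar>f $ s\<bar> powr p)"
  using assms by (simp add: lpnorm_def powr_powr sum_nonneg)

lemma conc_eq_concentrability: "conc K \<gamma> \<mu> \<nu> \<pi> = concentrability \<gamma> \<mu> \<nu> (Pmat K \<pi>)"
  by (simp add: conc_def concentrability_def occupancy_def)

lemma stochastic_matrix_Pmat: "stochastic_matrix (Pmat K \<sigma>)"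
  unfolding stochastic_matrix_def
proof safe
  fix s t
  show "0 \<le> Pmat K \<sigma> $ s $ t"
    by (simp add: Pmat_def)
next
  fix s
  have "(\<Sum>t\<in>UNIV. Pmat K \<sigma> $ s $ t) = measure_pmf.expectation (joint \<sigma> s) (\<lambda>a. \<Sum>t\<in>UNIV. pmf (K s a) t)"
    unfolding Pmat_def vec_lambda_beta
    by (rule Bochner_Integration.integral_sum[symmetric])
       (auto intro!: measure_pmf.integrable_const_bound[where B=1] simp: pmf_le_1)
  then show "(\<Sum>t\<in>UNIV. Pmat K \<sigma> $ s $ t) = 1"
    by (simp add: sum_pmf_eq_1)
qed

lemma finite_set_pmf_strategy:
  assumes "strategy A i \<sigma>" "finite (A i s)"
  shows "finite (set_pmf (\<sigma> s))"
  using assms unfolding strategy_def by (blast intro: finite_subset)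

lemma finite_set_pmf_Pi_pmf:
  fixes \<sigma> :: "'p::finite \<Rightarrow> 's \<Rightarrow> 'a pmf"
  assumes "\<And>j. finite (set_pmf (\<sigma> j s))"
  shows "finite (set_pmf (Pi_pmf I undefined (\<lambda>j. \<sigma> j s)))"
proof -
  have "set_pmf (Pi_pmf I undefined (\<lambda>j. \<sigma> j s)) \<subseteq> PiE_dflt I undefined (set_pmf \<circ> (\<lambda>j. \<sigma> j s))"
    by (rule set_Pi_pmf_subset') simp
  moreover have "finite (PiE_dflt I undefined (set_pmf \<circ> (\<lambda>j. \<sigma> j s)))"
    using assms by (intro finite_PiE_dflt) auto
  ultimately show ?thesis
    by (rule finite_subset)
qed

lemma finite_set_pmf_joint:
  assumes "\<And>j. finite (set_pmf (\<sigma> j s))"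
  shows "finite (set_pmf (joint \<sigma> s))"
  unfolding joint_def using assms by (rule finite_set_pmf_Pi_pmf)

lemma set_pmf_joint: "set_pmf (joint \<sigma> s) = {f. \<forall>j. f j \<in> set_pmf (\<sigma> j s)}"
  unfolding joint_def by (subst set_Pi_pmf) (auto simp: PiE_dflt_def)

lemma joint_fun_upd:
  "joint (\<sigma>(i := \<tau>)) s
    = map_pmf (\<lambda>(y, f). f(i := y)) (pair_pmf (\<tau> s) (Pi_pmf (UNIV - {i}) undefined (\<lambda>j. \<sigma> j s)))"
proof -
  have "joint (\<sigma>(i := \<tau>)) s = Pi_pmf (insert i (UNIV - {i})) undefined (\<lambda>j. (\<sigma>(i := \<tau>)) j s)"
    unfolding joint_def by (simp add: insert_absorb)
  also have "\<dots> = map_pmf (\<lambda>(y, f). f(i := y))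
      (pair_pmf (\<tau> s) (Pi_pmf (UNIV - {i}) undefined (\<lambda>j. (\<sigma>(i := \<tau>)) j s)))"
    by (subst Pi_pmf_insert) auto
  also have "Pi_pmf (UNIV - {i}) undefined (\<lambda>j. (\<sigma>(i := \<tau>)) j s) = Pi_pmf (UNIV - {i}) undefined (\<lambda>j. \<sigma> j s)"
    by (rule Pi_pmf_cong) auto
  finally show ?thesis .
qed

text \<open>Conditioning on the action of player \<open>i\<close>: the other players act independently of it.\<close>
lemma expectation_joint_fun_upd:
  fixes \<sigma> :: "'p::finite \<Rightarrow> 's \<Rightarrow> 'a pmf"
  assumes fin: "finite (set_pmf (\<tau> s))" "\<And>j. finite (set_pmf (\<sigma> j s))"
  shows "measure_pmf.expectation (joint (\<sigma>(i := \<tau>)) s) F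
    = (\<Sum>y\<in>set_pmf (\<tau> s). pmf (\<tau> s) y * measure_pmf.expectation (joint (\<sigma>(i := (\<lambda>_. return_pmf y))) s) F)"
proof -
  define Q where "Q = Pi_pmf (UNIV - {i}) undefined (\<lambda>j. \<sigma> j s)"
  have finQ: "finite (set_pmf Q)"
    unfolding Q_def using fin(2) by (rule finite_set_pmf_Pi_pmf)
  have pure: "measure_pmf.expectation (joint (\<sigma>(i := (\<lambda>_. return_pmf y))) s) F
      = measure_pmf.expectation Q (\<lambda>f. F (f(i := y)))" for y
    unfolding joint_fun_upd Q_def[symmetric] by (simp add: pair_return_pmf1)
  have "measure_pmf.expectation (joint (\<sigma>(i := \<tau>)) s) F
      = measure_pmf.expectation (pair_pmf (\<tau> s) Q) (\<lambda>(y, f). F (f(i := y)))"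
    unfolding joint_fun_upd Q_def[symmetric] by (simp add: case_prod_beta')
  also have "\<dots> = (\<Sum>x\<in>set_pmf (\<tau> s) \<times> set_pmf Q. (\<lambda>(y, f). F (f(i := y))) x * pmf (pair_pmf (\<tau> s) Q) x)"
    by (rule integral_measure_pmf_real) (use fin finQ in auto)
  also have "\<dots> = (\<Sum>x\<in>set_pmf (\<tau> s) \<times> set_pmf Q. F ((snd x)(i := fst x)) * (pmf (\<tau> s) (fst x) * pmf Q (snd x)))"
    by (intro sum.cong refl) (auto simp: pmf_pair)
  also have "\<dots> = (\<Sum>y\<in>set_pmf (\<tau> s). \<Sum>f\<in>set_pmf Q. F (f(i := y)) * (pmf (\<tau> s) y * pmf Q f))"
    by (simp add: sum.cartesian_product split_def)
  also have "\<dots> = (\<Sum>y\<in>set_pmf (\<tau> s). pmf (\<tau> s) y * (\<Sum>f\<in>set_pmf Q. F (f(i := y)) * pmf Q f))"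
    by (simp add: sum_distrib_left mult_ac)
  also have "\<dots> = (\<Sum>y\<in>set_pmf (\<tau> s). pmf (\<tau> s) y * measure_pmf.expectation Q (\<lambda>f. F (f(i := y))))"
    by (subst integral_measure_pmf_real[where A="set_pmf Q"]) (use finQ in auto)
  finally show ?thesis
    by (simp add: pure)
qed

lemma expectation_add_discounted_sum:
  fixes D :: "'b pmf" and w :: "'s::finite \<Rightarrow> real"
  assumes "finite (set_pmf D)"
  shows "measure_pmf.expectation D (\<lambda>b. r b + \<gamma> * (\<Sum>t\<in>UNIV. pmf (K b) t * w t))
    = measure_pmf.expectation D r + \<gamma> * (\<Sum>t\<in>UNIV. measure_pmf.expectation D (\<lambda>b. pmf (K b) t) * w t)"
  using assms
  by (simp add: integrable_measure_pmf_finite integral_add Bochner_Integration.integral_sum)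

lemma T_op_nth_eq_expectation:
  assumes "\<And>j. finite (set_pmf (\<sigma> j s))"
  shows "T_op K r \<gamma> i \<sigma> v $ s
    = measure_pmf.expectation (joint \<sigma> s) (\<lambda>b. r i s b + \<gamma> * (\<Sum>t\<in>UNIV. pmf (K s b) t * v $ t))"
  using expectation_add_discounted_sum[OF finite_set_pmf_joint[of \<sigma> s, OF assms], of "r i s" \<gamma> "K s" "\<lambda>t. v$t"]
  by (simp add: T_op_def rvec_def Pmat_def)

lemma Bellman_candidate_eq_expectation:
  assumes "\<And>j. finite (set_pmf (\<sigma> j s))"
  shows "r_mi r i \<sigma> s a + \<gamma> * (\<Sum>t\<in>UNIV. P_mi K i \<sigma> s a t * v $ t)
    = measure_pmf.expectation (joint (\<sigma>(i := (\<lambda>_. return_pmf a))) s)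
        (\<lambda>b. r i s b + \<gamma> * (\<Sum>t\<in>UNIV. pmf (K s b) t * v $ t))"
proof -
  have "finite (set_pmf ((\<sigma>(i := (\<lambda>_. return_pmf a))) j s))" for j
    using assms by (cases "j = i") auto
  then show ?thesis
    using expectation_add_discounted_sum[OF finite_set_pmf_joint, of "\<sigma>(i := (\<lambda>_. return_pmf a))" s "r i s" \<gamma> "K s" "\<lambda>t. v$t"]
    by (simp add: r_mi_def P_mi_def)
qed

lemma T_op_fun_upd_le_Tstar_op:
  assumes fin: "\<And>j. finite (set_pmf (\<pi> j s))" and A_fin: "finite (A i s)"
    and sub: "set_pmf (\<pi>s s) \<subseteq> A i s"
  shows "T_op K r \<gamma> i (\<pi>(i := \<pi>s)) v $ s \<le> Tstar_op K r \<gamma> A i \<pi> v $ s"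
proof -
  define \<phi> where "\<phi> a = r_mi r i \<pi> s a + \<gamma> * (\<Sum>t\<in>UNIV. P_mi K i \<pi> s a t * v $ t)" for a
  have finS: "finite (set_pmf (\<pi>s s))"
    using sub A_fin finite_subset by blast
  have "finite (set_pmf ((\<pi>(i := \<pi>s)) j s))" for j
    using fin finS by (cases "j = i") auto
  then have "T_op K r \<gamma> i (\<pi>(i := \<pi>s)) v $ s = (\<Sum>y\<in>set_pmf (\<pi>s s). pmf (\<pi>s s) y * \<phi> y)"
    by (simp add: T_op_nth_eq_expectation expectation_joint_fun_upd[where \<sigma>=\<pi> and \<tau>=\<pi>s, OF finS fin]
        \<phi>_def Bellman_candidate_eq_expectation[where \<sigma>=\<pi>, OF fin])
  also have "\<dots> \<le> (\<Sum>y\<in>set_pmf (\<pi>s s). pmf (\<pi>s s) y * Max (\<phi> ` A i s))"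
    using sub A_fin by (intro sum_mono mult_left_mono Max_ge) auto
  also have "\<dots> = Max (\<phi> ` A i s)"
    using finS by (simp add: sum_distrib_right[symmetric] sum_pmf_eq_1)
  finally show ?thesis
    by (simp add: Tstar_op_def \<phi>_def)
qed

lemma val_minus_eq_resolvent:
  assumes g: "0 \<le> \<gamma>" "\<gamma> < 1"
  shows "val K r \<gamma> i \<sigma> - v = resolvent \<gamma> (Pmat K \<sigma>) *v (T_op K r \<gamma> i \<sigma> v - v)"
proof -
  note P = stochastic_matrix_Pmat[of K \<sigma>]
  have "(mat 1 - \<gamma> *\<^sub>R Pmat K \<sigma>) *v val K r \<gamma> i \<sigma> = rvec r i \<sigma>"
    unfolding val_def by (rule discount_matrix_mult_resolvent[OF P g])
  then have "(mat 1 - \<gamma> *\<^sub>R Pmat K \<sigma>) *v (val K r \<gamma> i \<sigma> - v) = T_op K r \<gamma> i \<sigma> v - v"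
    by (simp add: matrix_vector_mult_diff_distrib vec_eq_iff discount_matrix_mult_nth T_op_def)
  then show ?thesis
    using resolvent_mult_discount_matrix[OF P g, of "val K r \<gamma> i \<sigma> - v"] by simp
qed

lemma val_nth_le_reward_bound:
  fixes A :: "'p::finite \<Rightarrow> 's::finite \<Rightarrow> 'a set"
  assumes A_fin: "\<And>j s. finite (A j s)" and g: "0 \<le> \<gamma>" "\<gamma> < 1"
    and \<sigma>: "joint_strategy A \<sigma>"
  shows "val K r \<gamma> i \<sigma> $ s \<le> (\<Sum>s\<in>UNIV. \<Sum>f\<in>{f. \<forall>j. f j \<in> A j s}. \<bar>r i s f\<bar>) / (1 - \<gamma>)"
proof -
  define B where "B = (\<Sum>s\<in>UNIV. \<Sum>f\<in>{f. \<forall>j. f j \<in> A j s}. \<bar>r i s f\<bar>)"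
  have finite_actions: "finite {f. \<forall>j. f j \<in> A j s}" for s
  proof -
    have "{f. \<forall>j. f j \<in> A j s} = PiE UNIV (\<lambda>j. A j s)"
      by (auto simp: PiE_def extensional_def)
    then show ?thesis
      using A_fin by (simp add: finite_PiE)
  qed
  have sub: "set_pmf (\<sigma> j s) \<subseteq> A j s" for j s
    using \<sigma> by (auto simp: joint_strategy_def strategy_def)
  have "finite (set_pmf (\<sigma> j s))" for j s
    using sub A_fin finite_subset by blast
  then have fin: "finite (set_pmf (joint \<sigma> s))" for s
    by (rule finite_set_pmf_joint)
  have r_le: "r i s b \<le> B" if "b \<in> set_pmf (joint \<sigma> s)" for s b
  proof -
    have "b \<in> {f. \<forall>j. f j \<in> A j s}"
      using that sub by (auto simp: set_pmf_joint)
    then have "\<bar>r i s b\<bar> \<le> (\<Sum>f\<in>{f. \<forall>j. f j \<in> A j s}. \<bar>r i s f\<bar>)"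
      using finite_actions by (intro member_le_sum) auto
    then have "r i s b \<le> (\<Sum>f\<in>{f. \<forall>j. f j \<in> A j s}. \<bar>r i s f\<bar>)"
      by linarith
    also have "\<dots> \<le> B"
      unfolding B_def by (rule member_le_sum[where f="\<lambda>s. \<Sum>f\<in>{f. \<forall>j. f j \<in> A j s}. \<bar>r i s f\<bar>"])
        (auto intro: sum_nonneg)
    finally show ?thesis .
  qed
  have rvec_le: "rvec r i \<sigma> $ s \<le> B" for s
  proof -
    have "rvec r i \<sigma> $ s = (\<Sum>b\<in>set_pmf (joint \<sigma> s). r i s b * pmf (joint \<sigma> s) b)"
      unfolding rvec_def vec_lambda_beta by (rule integral_measure_pmf_real) (use fin in auto)
    also have "\<dots> \<le> (\<Sum>b\<in>set_pmf (joint \<sigma> s). B * pmf (joint \<sigma> s) b)"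
      by (intro sum_mono mult_right_mono r_le) auto
    also have "\<dots> = B"
      using fin by (simp add: sum_distrib_left[symmetric] sum_pmf_eq_1)
    finally show ?thesis .
  qed
  have "val K r \<gamma> i \<sigma> $ s \<le> (resolvent \<gamma> (Pmat K \<sigma>) *v (\<chi> t. B)) $ s"
    unfolding val_def by (rule resolvent_mult_mono[OF stochastic_matrix_Pmat g]) (simp add: rvec_le)
  also have "\<dots> = B / (1 - \<gamma>)"
    by (simp add: resolvent_mult_const[OF stochastic_matrix_Pmat g])
  finally show ?thesis
    unfolding B_def .
qed

lemma val_le_br_val:
  fixes A :: "'p::finite \<Rightarrow> 's::finite \<Rightarrow> 'a set"
  assumes A_fin: "\<And>j s. finite (A j s)" and g: "0 \<le> \<gamma>" "\<gamma> < 1"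
    and \<pi>: "joint_strategy A \<pi>"
  shows "val K r \<gamma> i \<pi> $ s \<le> br_val K r \<gamma> A i \<pi> $ s"
proof -
  have "bdd_above ((\<lambda>\<sigma>. val K r \<gamma> i (\<pi>(i := \<sigma>)) $ s) ` {\<sigma>. strategy A i \<sigma>})"
  proof (rule bdd_aboveI2)
    fix \<sigma> assume "\<sigma> \<in> {\<sigma>. strategy A i \<sigma>}"
    then have "joint_strategy A (\<pi>(i := \<sigma>))"
      using \<pi> by (auto simp: joint_strategy_def)
    then show "val K r \<gamma> i (\<pi>(i := \<sigma>)) $ s
        \<le> (\<Sum>s\<in>UNIV. \<Sum>f\<in>{f. \<forall>j. f j \<in> A j s}. \<bar>r i s f\<bar>) / (1 - \<gamma>)"
      by (rule val_nth_le_reward_bound[OF A_fin g])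
  qed
  moreover have "strategy A i (\<pi> i)"
    using \<pi> by (simp add: joint_strategy_def)
  ultimately have "val K r \<gamma> i (\<pi>(i := \<pi> i)) $ s \<le> (SUP \<sigma>\<in>{\<sigma>. strategy A i \<sigma>}. val K r \<gamma> i (\<pi>(i := \<sigma>)) $ s)"
    by (intro cSUP_upper) simp_all
  then show ?thesis
    by (simp add: br_val_def)
qed

text \<open>Both values are compared with \<open>v\<close>: \<open>v\<^sub>\<pi> - v\<close> is the resolvent applied to the Bellman
  residual, and the residual of \<open>\<pi>(i := \<pi>s)\<close> is dominated by that of the optimality operator.\<close>
lemma val_fun_upd_minus_val_le:
  fixes A :: "'p::finite \<Rightarrow> 's::finite \<Rightarrow> 'a set"
  assumes A_fin: "\<And>j s. finite (A j s)" and g: "0 \<le> \<gamma>" "\<gamma> < 1"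
    and \<pi>: "joint_strategy A \<pi>" and \<pi>s: "strategy A i \<pi>s"
  shows "(val K r \<gamma> i (\<pi>(i := \<pi>s)) - val K r \<gamma> i \<pi>) $ s
    \<le> (resolvent \<gamma> (Pmat K (\<pi>(i := \<pi>s))) *v (\<chi> t. \<bar>(Tstar_op K r \<gamma> A i \<pi> v - v) $ t\<bar>)) $ s
     + (resolvent \<gamma> (Pmat K \<pi>) *v (\<chi> t. \<bar>(T_op K r \<gamma> i \<pi> v - v) $ t\<bar>)) $ s"
proof -
  have fin: "finite (set_pmf (\<pi> j s))" for j s
    using \<pi> A_fin by (auto simp: joint_strategy_def intro: finite_set_pmf_strategy)
  have sub: "set_pmf (\<pi>s s) \<subseteq> A i s" for s
    using \<pi>s by (simp add: strategy_def)
  have "(val K r \<gamma> i (\<pi>(i := \<pi>s)) - v) $ s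
      \<le> (resolvent \<gamma> (Pmat K (\<pi>(i := \<pi>s))) *v (\<chi> t. \<bar>(Tstar_op K r \<gamma> A i \<pi> v - v) $ t\<bar>)) $ s"
    unfolding val_minus_eq_resolvent[OF g]
  proof (rule resolvent_mult_mono[OF stochastic_matrix_Pmat g])
    fix t
    show "(T_op K r \<gamma> i (\<pi>(i := \<pi>s)) v - v) $ t \<le> (\<chi> t. \<bar>(Tstar_op K r \<gamma> A i \<pi> v - v) $ t\<bar>) $ t"
      using T_op_fun_upd_le_Tstar_op[where \<pi>=\<pi> and A=A and \<pi>s=\<pi>s, OF fin A_fin sub, of K r \<gamma> v t] by simp
  qed
  moreover have "(v - val K r \<gamma> i \<pi>) $ s \<le> (resolvent \<gamma> (Pmat K \<pi>) *v (\<chi> t. \<bar>(T_op K r \<gamma> i \<pi> v - v) $ t\<bar>)) $ s"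
  proof -
    have "(v - val K r \<gamma> i \<pi>) $ s = (resolvent \<gamma> (Pmat K \<pi>) *v (v - T_op K r \<gamma> i \<pi> v)) $ s"
      using arg_cong[OF val_minus_eq_resolvent[OF g, of K r i \<pi> v], of "\<lambda>x. - x $ s"]
      by (simp add: matrix_vector_mult_diff_distrib)
    also have "\<dots> \<le> (resolvent \<gamma> (Pmat K \<pi>) *v (\<chi> t. \<bar>(T_op K r \<gamma> i \<pi> v - v) $ t\<bar>)) $ s"
      by (rule resolvent_mult_mono[OF stochastic_matrix_Pmat g]) simp
    finally show ?thesis .
  qed
  ultimately show ?thesis
    by simp
qed

theorem lemma1:
  fixes A :: "'p::finite \<Rightarrow> 's::finite \<Rightarrow> 'a set"
    and r :: "'p \<Rightarrow> 's \<Rightarrow> ('p \<Rightarrow> 'a) \<Rightarrow> real"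
    and K :: "'s \<Rightarrow> ('p \<Rightarrow> 'a) \<Rightarrow> 's pmf"
    and \<gamma> p p' :: real
    and \<mu> \<nu> :: "'s pmf"
    and \<pi> :: "'p \<Rightarrow> 's \<Rightarrow> 'a pmf"
    and i :: 'p
    and \<pi>s :: "'s \<Rightarrow> 'a pmf"
    and v :: "real^'s"
  assumes A_fin: "\<And>j s. finite (A j s)"
    and A_ne: "\<And>j s. A j s \<noteq> {}"
    and gamma: "0 \<le> \<gamma>" "\<gamma> < 1"
    and p: "p > 1" "p' > 1" "1 / p + 1 / p' = 1"
    and nu_pos: "\<And>s. pmf \<nu> s > 0"
    and pi: "joint_strategy A \<pi>"
    and pis: "strategy A i \<pi>s"
    and best: "val K r \<gamma> i (\<pi>(i := \<pi>s)) = br_val K r \<gamma> A i \<pi>"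
  shows "lpnorm \<mu> p (val K r \<gamma> i (\<pi>(i := \<pi>s)) - val K r \<gamma> i \<pi>)
    \<le> 1 / (1 - \<gamma>) *
       (conc K \<gamma> \<mu> \<nu> (\<pi>(i := \<pi>s)) powr (p' / p) + conc K \<gamma> \<mu> \<nu> \<pi> powr (p' / p)) powr (1 / p') *
       ((lpnorm \<nu> p (Tstar_op K r \<gamma> A i \<pi> v - v)) powr p + (lpnorm \<nu> p (T_op K r \<gamma> i \<pi> v - v)) powr p) powr (1 / p)"
proof -
  define a where "a = (\<chi> s. \<bar>(Tstar_op K r \<gamma> A i \<pi> v - v) $ s\<bar>)"
  define b where "b = (\<chi> s. \<bar>(T_op K r \<gamma> i \<pi> v - v) $ s\<bar>)"
  define G where "G s = (1 - \<gamma>) * (resolvent \<gamma> (Pmat K (\<pi>(i := \<pi>s))) *v a) $ s" for s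
  define H where "H s = (1 - \<gamma>) * (resolvent \<gamma> (Pmat K \<pi>) *v b) $ s" for s
  note P = stochastic_matrix_Pmat and nonneg = resolvent_mult_nonneg[OF stochastic_matrix_Pmat gamma]
  have "0 \<le> (val K r \<gamma> i (\<pi>(i := \<pi>s)) - val K r \<gamma> i \<pi>) $ s" for s
    using val_le_br_val[OF A_fin gamma pi, of K r i s] best by simp
  moreover have "1 / (1 - \<gamma>) * (G s + H s)
      = (resolvent \<gamma> (Pmat K (\<pi>(i := \<pi>s))) *v a) $ s + (resolvent \<gamma> (Pmat K \<pi>) *v b) $ s" for s
    using gamma by (simp add: G_def H_def distrib_left[symmetric])
  ultimately have "\<bar>(val K r \<gamma> i (\<pi>(i := \<pi>s)) - val K r \<gamma> i \<pi>) $ s\<bar> \<le> 1 / (1 - \<gamma>) * (G s + H s)" for s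
    using val_fun_upd_minus_val_le[OF A_fin gamma pi pis, of K r s v] by (simp add: a_def b_def)
  moreover have "0 \<le> G s" "0 \<le> H s" for s
  proof -
    have "0 \<le> a $ t" "0 \<le> b $ t" for t
      by (simp_all add: a_def b_def)
    then show "0 \<le> G s" "0 \<le> H s"
      unfolding G_def H_def using gamma by (simp_all add: nonneg)
  qed
  moreover have "(\<Sum>s\<in>UNIV. pmf \<mu> s * G s powr p)
      \<le> conc K \<gamma> \<mu> \<nu> (\<pi>(i := \<pi>s)) * lpnorm \<nu> p (Tstar_op K r \<gamma> A i \<pi> v - v) powr p"
    "(\<Sum>s\<in>UNIV. pmf \<mu> s * H s powr p) \<le> conc K \<gamma> \<mu> \<nu> \<pi> * lpnorm \<nu> p (T_op K r \<gamma> i \<pi> v - v) powr p"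
    using sum_powr_resolvent_mult_le_concentrability[OF P gamma _ _ nu_pos, of p a \<mu>]
      sum_powr_resolvent_mult_le_concentrability[OF P gamma _ _ nu_pos, of p b \<mu>] p
    by (simp_all add: G_def H_def a_def b_def lpnorm_powr conc_eq_concentrability)
  moreover have "conc K \<gamma> \<mu> \<nu> \<sigma> > 0" for \<sigma>
    unfolding conc_eq_concentrability by (rule concentrability_pos[OF P gamma nu_pos])
  ultimately show ?thesis
    using gamma by (intro lpnorm_le_conjugate[OF p(1,3)]) auto
qed

end
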